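(* Let $c\in\mathcal C^1([0,1])$ with $c>0$, $\alpha>0$, and let $(\bar u,\bar v)$ be a $\mathcal C^1$ stationary solution of system (S) satisfying either (PBC) with $\bar u,\bar v>0$ on $[0,1]$, or (DBC) with $m\le\bar u(x)/x\le M$ and $m\le\bar v(x)/(1-x)\le M$ for $x\in(0,1)$ and constants $0<m\le M$. Let $(u,v)$ be a classical ($\mathcal C^1$) nonnegative solution of system (S) with the same boundary conditions, such that in case (DBC) $u(x,t)\le Kx$ and $v(x,t)\le K(1-x)$ for some constant $K$. Then $$\frac{d}{dt}\mathcal H[u,v]=-\frac{\alpha}{2}\int_0^1\frac{c\,J(u,v,\bar u,\bar v)}{(1+u+v)(1+\bar u+\bar v)}\,dx.$$
   Context: System (S): $\partial_t u+\partial_x(c(x)u)=\frac{\alpha v}{1+u+v}-u$, $\partial_t v-\partial_x(c(x)v)=\frac{\alpha u}{1+u+v}-v$ on $x\in[0,1]$; (DBC): $u(0,t)=0$, $v(1,t)=0$; (PBC): $u(0,t)=u(1,t)$, $v(0,t)=v(1,t)$, $c$ periodic. Lyapunov functional: $\mathcal H[u,v]=\frac12\int_0^1c\Big(\frac{\bar v}{\bar u}(u-\bar u)^2+\frac{\bar u}{\bar v}(v-\bar v)^2\Big)dx$ (for (DBC) the integrand is extended continuously by $0$ at $x=0,1$). $J(u,v,\bar u,\bar v)=\hat u^2[(1+u+v)(\bar u^2+\bar v^2)+2\bar v^2\bar u]+\hat v^2[(1+u+v)(\bar u^2+\bar v^2)+2\bar u^2\bar v]-2\hat u\hat v(\bar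 u^2+\bar v^2+\bar u^2\bar v+\bar u\bar v^2)$ with $\hat u=(u-\bar u)/\bar u$, $\hat v=(v-\bar v)/\bar v$. *)

theory Defs
  imports "HOL-Analysis.Analysis"
begin

definition Jfun :: "real \<Rightarrow> real \<Rightarrow> real \<Rightarrow> real \<Rightarrow> real" where
  "Jfun u v ub vb =
     (let uh = (u - ub) / ub; vh = (v - vb) / vb in
        uh\<^sup>2 * ((1 + u + v) * (ub\<^sup>2 + vb\<^sup>2) + 2 * vb\<^sup>2 * ub)
      + vh\<^sup>2 * ((1 + u + v) * (ub\<^sup>2 + vb\<^sup>2) + 2 * ub\<^sup>2 * vb)
      - 2 * uh * vh * (ub\<^sup>2 + vb\<^sup>2 + ub\<^sup>2 * vb + ub * vb\<^sup>2))"

text \<open>At points where ub or vb vanish (only x = 0, 1 in the Dirichlet case) HOL's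
  convention x/0 = 0 makes the integrand 0, which is the continuous extension
  used in the paper; in any case endpoints do not affect the integral.\<close>
definition Hfun :: "(real \<Rightarrow> real) \<Rightarrow> (real \<Rightarrow> real) \<Rightarrow> (real \<Rightarrow> real)
                      \<Rightarrow> (real \<Rightarrow> real) \<Rightarrow> (real \<Rightarrow> real) \<Rightarrow> real" where
  "Hfun c ub vb U V =
     (1/2) * integral {0..1}
       (\<lambda>x. c x * (vb x / ub x * (U x - ub x)\<^sup>2 + ub x / vb x * (V x - vb x)\<^sup>2))"

end

theory Submission
  imports Defs
begin

(*
  Write R = c (vb/ub (u - ub)^2 + ub/vb (v - vb)^2) for the density of H and
  F = c^2/2 (ub/vb (v - vb)^2 - vb/ub (u - ub)^2) for a flux. Eliminating u_t, v_t, ub', vb'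
  with the evolution and the stationary equations gives the pointwise identity
    R_t / 2 = F_x - alpha/2 * c J / ((1 + u + v) (1 + ub + vb)).
  Differentiating H under the integral sign and integrating F_x over [0,1], the theorem follows
  once F takes the same value at both ends: by periodicity for (PBC), and because F vanishes
  there for (DBC). In the Dirichlet case the weights vb/ub and ub/vb blow up at the ends, but
  the linear bounds on u, v, ub, vb dominate the weighted deviations by quantities vanishing at
  the ends, which keeps everything continuous up to the boundary, as Leibniz's rule and the
  fundamental theorem of calculus require.
*)

lemma continuous_on_Times_slice:
  assumes "continuous_on (X \<times> T) (\<lambda>(x, t). F x t)" "t \<in> T"
  shows "continuous_on X (\<lambda>x. F x t)"
proof -
  have "continuous_on X ((\<lambda>(x, t). F x t) \<circ> (\<lambda>x. (x, t)))"
    by (rule continuous_on_compose)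
      (use assms in \<open>auto intro: continuous_intros continuous_on_subset\<close>)
  then show ?thesis by (simp add: o_def)
qed

lemma continuous_on_Times_fst:
  assumes "continuous_on X f"
  shows "continuous_on (X \<times> T) (\<lambda>(x, t). f x)"
  using continuous_on_compose2[OF assms continuous_on_fst[OF continuous_on_id], of "X \<times> T"]
  by (auto simp: case_prod_beta)

lemma continuous_on_Times_of_time_derivative:
  fixes u ut :: "'a::metric_space \<Rightarrow> real \<Rightarrow> real"
  assumes T: "open T"
    and u_dt: "\<And>x t. x \<in> X \<Longrightarrow> t \<in> T \<Longrightarrow> ((\<lambda>s. u x s) has_real_derivative ut x t) (at t)"
    and ut_cont: "continuous_on (X \<times> T) (\<lambda>(x, t). ut x t)"
    and u_cont: "\<And>t. t \<in> T \<Longrightarrow> continuous_on X (\<lambda>x. u x t)"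
  shows "continuous_on (X \<times> T) (\<lambda>(x, t). u x t)"
  unfolding continuous_on_iff
proof (intro ballI allI impI)
  fix p e assume p: "p \<in> X \<times> T" and e: "(e::real) > 0"
  obtain x0 t0 where p_eq: "p = (x0, t0)" and x0: "x0 \<in> X" and t0: "t0 \<in> T"
    using p by auto
  obtain d1 where d1: "d1 > 0"
    and ut_near: "\<And>q. q \<in> X \<times> T \<Longrightarrow> dist q p < d1 \<Longrightarrow> dist ((\<lambda>(x, t). ut x t) q) (ut x0 t0) < 1"
    using ut_cont p unfolding continuous_on_iff p_eq by (metis case_prod_conv zero_less_one)
  define B where "B = \<bar>ut x0 t0\<bar> + 1"
  have B: "B > 0" by (simp add: B_def add_nonneg_pos)
  obtain r where r: "r > 0" "ball t0 r \<subseteq> T"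
    using T t0 open_contains_ball by blast
  obtain d2 where d2: "d2 > 0"
    and u_near: "\<And>x. x \<in> X \<Longrightarrow> dist x x0 < d2 \<Longrightarrow> dist (u x t0) (u x0 t0) < e/2"
    using u_cont[OF t0] x0 e unfolding continuous_on_iff by (metis half_gt_zero)
  define d where "d = Min {d1/2, r, e/(2*B), d2}"
  have d: "d > 0" "d \<le> d1/2" "d \<le> r" "d \<le> e/(2*B)" "d \<le> d2"
    using d1 r d2 e B by (auto simp: d_def)
  show "\<exists>d>0. \<forall>q\<in>X \<times> T. dist q p < d \<longrightarrow> dist ((\<lambda>(x, t). u x t) q) ((\<lambda>(x, t). u x t) p) < e"
  proof (intro exI[of _ d] conjI ballI impI d(1))
    fix q assume q: "q \<in> X \<times> T" and dq: "dist q p < d"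
    obtain x s where q_eq: "q = (x, s)" and x: "x \<in> X" and s: "s \<in> T" using q by auto
    have dx: "dist x x0 < d" and ds: "dist s t0 < d"
      using dist_fst_le[of q p] dist_snd_le[of q p] dq by (auto simp: q_eq p_eq)
    have ut_bound: "norm (ut x y) \<le> B" if y: "y \<in> ball t0 d" for y
    proof -
      have "y \<in> T" using y d(3) r(2) by auto
      moreover have "dist (x, y) p < d1"
        unfolding p_eq dist_Pair_Pair
        using dx y d(2) by (intro sqrt_sum_squares_half_less) (auto simp: dist_commute)
      ultimately have "dist (ut x y) (ut x0 t0) < 1" using ut_near[of "(x, y)"] x by auto
      then show ?thesis by (simp add: B_def dist_real_def)
    qed
    have "norm (u x s - u x t0) \<le> B * norm (s - t0)"
    proof (rule field_differentiable_bound[OF convex_ball _ ut_bound])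
      fix y assume "y \<in> ball t0 d"
      then have "y \<in> T" using d(3) r(2) by auto
      then show "((\<lambda>s. u x s) has_field_derivative ut x y) (at y within ball t0 d)"
        using u_dt[OF x] has_field_derivative_at_within by blast
    qed (use ds d(1) in \<open>auto simp: dist_commute\<close>)
    also have "\<dots> < B * (e / (2 * B))"
      using ds d(4) B by (intro mult_strict_left_mono) (auto simp: dist_real_def)
    finally have "\<bar>u x s - u x t0\<bar> < e/2" using B by simp
    moreover have "\<bar>u x t0 - u x0 t0\<bar> < e/2"
      using u_near[OF x] dx d(5) by (simp add: dist_real_def)
    ultimately show "dist ((\<lambda>(x, t). u x t) q) ((\<lambda>(x, t). u x t) p) < e"
      using abs_triangle_ineq[of "u x s - u x t0" "u x t0 - u x0 t0"]
      unfolding q_eq p_eq dist_real_def by simp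
  qed
qed

lemma continuous_on_dominated_vanishing:
  fixes F H :: "'a::t2_space \<Rightarrow> real"
  assumes "open A" "A \<subseteq> T" "continuous_on A F" "continuous_on T H"
    and dom: "\<And>y. y \<in> T \<Longrightarrow> \<bar>F y\<bar> \<le> H y"
    and vanish: "\<And>y. y \<in> T \<Longrightarrow> y \<notin> A \<Longrightarrow> F y = 0 \<and> H y = 0"
  shows "continuous_on T F"
proof (rule continuous_on_eq_continuous_within[THEN iffD2], intro ballI)
  fix y assume y: "y \<in> T"
  show "continuous (at y within T) F"
  proof (cases "y \<in> A")
    case True
    then have "isCont F y" using assms(1,3) continuous_on_eq_continuous_at by blast
    then show ?thesis by (rule continuous_at_imp_continuous_within)
  next
    case False
    with vanish[OF y] have "F y = 0" "H y = 0" by auto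
    have "eventually (\<lambda>z. norm (F z) \<le> H z) (at y within T)"
      using dom by (auto simp: eventually_at_filter)
    moreover have "(H \<longlongrightarrow> 0) (at y within T)"
      using assms(4) y \<open>H y = 0\<close> unfolding continuous_on_def by auto
    ultimately have "(F \<longlongrightarrow> 0) (at y within T)" by (rule Lim_null_comparison)
    then show ?thesis using \<open>F y = 0\<close> unfolding continuous_within by simp
  qed
qed

lemma continuous_on_ratio_product:
  fixes a b :: "real \<Rightarrow> real" and w h :: "real \<Rightarrow> 'a::t2_space \<Rightarrow> real"
  assumes "open S"
    and a_cont: "continuous_on {0..1} a" and b_cont: "continuous_on {0..1} b"
    and w_cont: "continuous_on ({0..1} \<times> S) (\<lambda>(x, s). w x s)"
    and h_cont: "continuous_on ({0..1} \<times> S) (\<lambda>(x, s). h x s)"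
    and a_pos: "\<And>x. x \<in> {0<..<1} \<Longrightarrow> 0 < a x"
    and w_le: "\<And>x s. x \<in> {0<..<1} \<Longrightarrow> s \<in> S \<Longrightarrow> \<bar>w x s\<bar> \<le> L * a x"
    and ends: "\<And>x s. x \<in> {0, 1} \<Longrightarrow> s \<in> S \<Longrightarrow> (a x = 0 \<and> h x s = 0) \<or> b x = 0"
  shows "continuous_on ({0..1} \<times> S) (\<lambda>(x, s). b x / a x * w x s * h x s)"
  \<comment> \<open>At an end where a x = 0 the function is 0 only because x / 0 = 0 in HOL.\<close>
proof (rule continuous_on_dominated_vanishing[where A = "{0<..<1} \<times> S"
      and H = "\<lambda>(x, s). L * \<bar>b x\<bar> * \<bar>h x s\<bar>"])
  note fst_cont = continuous_on_Times_fst[where T = S, unfolded case_prod_beta]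
  have sub: "{0<..<1::real} \<times> S \<subseteq> {0..1} \<times> S" by auto
  show "continuous_on ({0<..<1} \<times> S) (\<lambda>(x, s). b x / a x * w x s * h x s)"
    using continuous_on_subset[OF fst_cont[OF a_cont] sub]
      continuous_on_subset[OF fst_cont[OF b_cont] sub]
      continuous_on_subset[OF w_cont sub] continuous_on_subset[OF h_cont sub] a_pos
    unfolding case_prod_beta by (intro continuous_intros) (auto simp: less_imp_neq[symmetric])
  show "continuous_on ({0..1} \<times> S) (\<lambda>(x, s). L * \<bar>b x\<bar> * \<bar>h x s\<bar>)"
    using fst_cont[OF b_cont] h_cont unfolding case_prod_beta by (intro continuous_intros)
  fix p :: "real \<times> 'a" assume p: "p \<in> {0..1} \<times> S"
  then obtain x s where p_eq: "p = (x, s)" and x: "x \<in> {0..1}" and s: "s \<in> S" by auto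
  show "\<bar>(\<lambda>(x, s). b x / a x * w x s * h x s) p\<bar> \<le> (\<lambda>(x, s). L * \<bar>b x\<bar> * \<bar>h x s\<bar>) p"
  proof (cases "x \<in> {0<..<1}")
    case True
    have "\<bar>b x / a x * w x s * h x s\<bar> = \<bar>b x\<bar> / a x * \<bar>w x s\<bar> * \<bar>h x s\<bar>"
      using a_pos[OF True] by (simp add: abs_mult)
    also have "\<dots> \<le> \<bar>b x\<bar> / a x * (L * a x) * \<bar>h x s\<bar>"
      using a_pos[OF True] w_le[OF True s] by (intro mult_right_mono mult_left_mono) auto
    also have "\<dots> = L * \<bar>b x\<bar> * \<bar>h x s\<bar>" using a_pos[OF True] by simp
    finally show ?thesis by (simp add: p_eq)
  next
    case False
    with x ends[of x s] s have "(a x = 0 \<and> h x s = 0) \<or> b x = 0" by auto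
    then show ?thesis by (auto simp: p_eq)
  qed
  assume "p \<notin> {0<..<1} \<times> S"
  with x ends[of x s] s have "(a x = 0 \<and> h x s = 0) \<or> b x = 0" by (auto simp: p_eq)
  then show "(\<lambda>(x, s). b x / a x * w x s * h x s) p = 0 \<and> (\<lambda>(x, s). L * \<bar>b x\<bar> * \<bar>h x s\<bar>) p = 0"
    by (auto simp: p_eq)
qed (use \<open>open S\<close> in \<open>auto intro: open_Times\<close>)

lemma abs_diff_le_of_linear_bounds:
  fixes y z d K m M :: real
  assumes "0 < m" "0 < d" "0 \<le> y" "y \<le> K * d" "m * d \<le> z" "z \<le> M * d"
  shows "\<bar>y - z\<bar> \<le> (K + M) / m * z"
proof -
  have "0 \<le> K * d" using assms(3,4) by linarith
  then have "0 \<le> K" using assms(2) by (simp add: zero_le_mult_iff)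
  have "0 < m * d" using assms(1,2) by simp
  then have "0 \<le> z" "0 < M * d" using assms(5,6) by linarith+
  then have "0 \<le> M" using assms(2) by (simp add: zero_less_mult_iff)
  have "\<bar>y - z\<bar> \<le> (K + M) * d" using assms \<open>0 \<le> z\<close> by (simp add: abs_le_iff algebra_simps)
  also have "\<dots> = (K + M) / m * (m * d)" using assms(1) by simp
  also have "\<dots> \<le> (K + M) / m * z"
    using assms \<open>0 \<le> K\<close> \<open>0 \<le> M\<close> by (intro mult_left_mono) auto
  finally show ?thesis .
qed

lemma has_real_derivative_integral_parametric:
  fixes f g :: "real \<Rightarrow> real \<Rightarrow> real"
  assumes T: "open T" "t \<in> T"
    and f_dt: "\<And>x s. x \<in> {a..b} \<Longrightarrow> s \<in> T \<Longrightarrow> ((\<lambda>s. f x s) has_real_derivative g x s) (at s)"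
    and f_cont: "\<And>s. s \<in> T \<Longrightarrow> continuous_on {a..b} (\<lambda>x. f x s)"
    and g_cont: "continuous_on ({a..b} \<times> T) (\<lambda>(x, s). g x s)"
  shows "((\<lambda>s. integral {a..b} (\<lambda>x. f x s)) has_real_derivative integral {a..b} (\<lambda>x. g x t)) (at t)"
proof -
  obtain r where r: "r > 0" "ball t r \<subseteq> T" using T open_contains_ball by blast
  then have in_T: "s \<in> T" if "s \<in> ball t r" for s using that by auto
  have "((\<lambda>s. integral (cbox a b) (\<lambda>x. f x s)) has_real_derivative integral (cbox a b) (\<lambda>x. g x t))
          (at t within ball t r)"
  proof (rule leibniz_rule_field_derivative[where f = "\<lambda>s x. f x s" and fx = "\<lambda>s x. g x s"])
    show "((\<lambda>s. f x s) has_real_derivative g x s) (at s within ball t r)"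
      if "s \<in> ball t r" "x \<in> cbox a b" for s x
      using that f_dt[OF _ in_T] by (auto simp: cbox_interval intro: has_field_derivative_at_within)
    show "(\<lambda>x. f x s) integrable_on cbox a b" if "s \<in> ball t r" for s
      using f_cont[OF in_T[OF that]] by (simp add: cbox_interval integrable_continuous_interval)
    show "continuous_on (ball t r \<times> cbox a b) (\<lambda>(s, x). g x s)"
      unfolding cbox_interval
      by (rule continuous_on_subset[OF continuous_on_swap_args[OF g_cont]]) (use r in auto)
  qed (use r in auto)
  moreover have "at t within ball t r = at t" by (rule at_within_open) (use r in auto)
  ultimately show ?thesis by (simp add: cbox_interval)
qed

definition lyapunov_flux :: "real \<Rightarrow> real \<Rightarrow> real \<Rightarrow> real \<Rightarrow> real \<Rightarrow> real" where
  "lyapunov_flux c ub vb u v = c\<^sup>2 / 2 * (ub / vb * (v - vb)\<^sup>2 - vb / ub * (u - ub)\<^sup>2)"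

lemma lyapunov_flux_has_derivative:
  fixes C UB VB U V :: "real \<Rightarrow> real"
  assumes dC: "(C has_real_derivative C') (at x)"
    and dUB: "(UB has_real_derivative UB') (at x)" and dVB: "(VB has_real_derivative VB') (at x)"
    and dU: "(U has_real_derivative U') (at x)" and dV: "(V has_real_derivative V') (at x)"
    and pos: "C x \<noteq> 0" "UB x > 0" "VB x > 0" "U x \<ge> 0" "V x \<ge> 0"
    and stat_u: "C' * UB x + C x * UB' = \<alpha> * VB x / (1 + UB x + VB x) - UB x"
    and stat_v: "- (C' * VB x + C x * VB') = \<alpha> * UB x / (1 + UB x + VB x) - VB x"
    and eq_u: "Ut + (C' * U x + C x * U') = \<alpha> * V x / (1 + U x + V x) - U x"
    and eq_v: "Vt - (C' * V x + C x * V') = \<alpha> * U x / (1 + U x + V x) - V x"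
  shows "((\<lambda>y. lyapunov_flux (C y) (UB y) (VB y) (U y) (V y)) has_real_derivative
           C x * (VB x / UB x * (U x - UB x) * Ut + UB x / VB x * (V x - VB x) * Vt)
           + \<alpha> / 2 * (C x * Jfun (U x) (V x) (UB x) (VB x) / ((1 + U x + V x) * (1 + UB x + VB x))))
         (at x)"
proof -
  have den: "1 + U x + V x \<noteq> 0" "1 + UB x + VB x \<noteq> 0" using pos by auto
  have dR2: "((\<lambda>y. UB y / VB y * (V y - VB y)\<^sup>2) has_real_derivative
      (UB' * VB x - UB x * VB') / (VB x * VB x) * (V x - VB x)\<^sup>2
      + of_nat 2 * ((V' - VB') * (V x - VB x) ^ (2 - Suc 0)) * (UB x / VB x)) (at x)"
    using pos by (intro DERIV_mult DERIV_divide DERIV_power DERIV_diff dUB dVB dU dV) auto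
  have dR1: "((\<lambda>y. VB y / UB y * (U y - UB y)\<^sup>2) has_real_derivative
      (VB' * UB x - VB x * UB') / (UB x * UB x) * (U x - UB x)\<^sup>2
      + of_nat 2 * ((U' - UB') * (U x - UB x) ^ (2 - Suc 0)) * (VB x / UB x)) (at x)"
    using pos by (intro DERIV_mult DERIV_divide DERIV_power DERIV_diff dUB dVB dU dV) auto
  have dC2: "((\<lambda>y. (C y)\<^sup>2 / 2) has_real_derivative of_nat 2 * (C' * C x ^ (2 - Suc 0)) / 2) (at x)"
    by (intro DERIV_cdivide DERIV_power dC)
  have "C x * UB' = \<alpha> * VB x / (1 + UB x + VB x) - UB x - C' * UB x" using stat_u by linarith
  then have UB': "UB' = (\<alpha> * VB x / (1 + UB x + VB x) - UB x - C' * UB x) / C x"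
    using pos(1) by (metis nonzero_mult_div_cancel_left)
  have "C x * VB' = VB x - \<alpha> * UB x / (1 + UB x + VB x) - C' * VB x" using stat_v by linarith
  then have VB': "VB' = (VB x - \<alpha> * UB x / (1 + UB x + VB x) - C' * VB x) / C x"
    using pos(1) by (metis nonzero_mult_div_cancel_left)
  have Ut: "Ut = \<alpha> * V x / (1 + U x + V x) - U x - (C' * U x + C x * U')" using eq_u by simp
  have Vt: "Vt = \<alpha> * U x / (1 + U x + V x) - V x + (C' * V x + C x * V')" using eq_v by simp
  show ?thesis
    unfolding lyapunov_flux_def
    by (rule DERIV_cong[OF DERIV_mult[OF dC2 DERIV_diff[OF dR2 dR1]]])
      (use pos den in \<open>simp add: UB' VB' Ut Vt Jfun_def Let_def divide_simps power2_eq_square;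
        algebra\<close>)
qed

locale transport_reaction_system =
  fixes \<alpha> :: real and c c' ub ub' vb vb' :: "real \<Rightarrow> real"
    and u ux ut v vx vt :: "real \<Rightarrow> real \<Rightarrow> real"
  assumes c_deriv: "\<And>x. x \<in> {0..1} \<Longrightarrow> (c has_real_derivative c' x) (at x within {0..1})"
    and c_pos: "\<And>x. x \<in> {0..1} \<Longrightarrow> 0 < c x"
    and ub_deriv: "\<And>x. x \<in> {0..1} \<Longrightarrow> (ub has_real_derivative ub' x) (at x within {0..1})"
    and vb_deriv: "\<And>x. x \<in> {0..1} \<Longrightarrow> (vb has_real_derivative vb' x) (at x within {0..1})"
    and stat_u: "\<And>x. x \<in> {0..1} \<Longrightarrow>
      c' x * ub x + c x * ub' x = \<alpha> * vb x / (1 + ub x + vb x) - ub x"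
    and stat_v: "\<And>x. x \<in> {0..1} \<Longrightarrow>
      - (c' x * vb x + c x * vb' x) = \<alpha> * ub x / (1 + ub x + vb x) - vb x"
    and u_dx: "\<And>x t. x \<in> {0..1} \<Longrightarrow> t > 0 \<Longrightarrow>
      ((\<lambda>y. u y t) has_real_derivative ux x t) (at x within {0..1})"
    and v_dx: "\<And>x t. x \<in> {0..1} \<Longrightarrow> t > 0 \<Longrightarrow>
      ((\<lambda>y. v y t) has_real_derivative vx x t) (at x within {0..1})"
    and u_dt: "\<And>x t. x \<in> {0..1} \<Longrightarrow> t > 0 \<Longrightarrow> ((\<lambda>s. u x s) has_real_derivative ut x t) (at t)"
    and v_dt: "\<And>x t. x \<in> {0..1} \<Longrightarrow> t > 0 \<Longrightarrow> ((\<lambda>s. v x s) has_real_derivative vt x t) (at t)"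
    and ut_cont: "continuous_on ({0..1} \<times> {0<..}) (\<lambda>(x, t). ut x t)"
    and vt_cont: "continuous_on ({0..1} \<times> {0<..}) (\<lambda>(x, t). vt x t)"
    and eq_u: "\<And>x t. x \<in> {0..1} \<Longrightarrow> t > 0 \<Longrightarrow>
      ut x t + (c' x * u x t + c x * ux x t) = \<alpha> * v x t / (1 + u x t + v x t) - u x t"
    and eq_v: "\<And>x t. x \<in> {0..1} \<Longrightarrow> t > 0 \<Longrightarrow>
      vt x t - (c' x * v x t + c x * vx x t) = \<alpha> * u x t / (1 + u x t + v x t) - v x t"
    and u_nonneg: "\<And>x t. x \<in> {0..1} \<Longrightarrow> t > 0 \<Longrightarrow> 0 \<le> u x t"
    and v_nonneg: "\<And>x t. x \<in> {0..1} \<Longrightarrow> t > 0 \<Longrightarrow> 0 \<le> v x t"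
begin

lemma continuous_on_c: "continuous_on {0..1} c"
  and continuous_on_ub: "continuous_on {0..1} ub"
  and continuous_on_vb: "continuous_on {0..1} vb"
  unfolding continuous_on_eq_continuous_within
  using c_deriv ub_deriv vb_deriv DERIV_continuous by blast+

lemma continuous_on_u: "continuous_on ({0..1} \<times> {0<..}) (\<lambda>(x, t). u x t)"
proof (rule continuous_on_Times_of_time_derivative[OF open_greaterThan _ ut_cont])
  show "continuous_on {0..1} (\<lambda>x. u x t)" if "t \<in> {0<..}" for t
    unfolding continuous_on_eq_continuous_within using that u_dx DERIV_continuous by force
qed (use u_dt in auto)

lemma continuous_on_v: "continuous_on ({0..1} \<times> {0<..}) (\<lambda>(x, t). v x t)"
proof (rule continuous_on_Times_of_time_derivative[OF open_greaterThan _ vt_cont])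
  show "continuous_on {0..1} (\<lambda>x. v x t)" if "t \<in> {0<..}" for t
    unfolding continuous_on_eq_continuous_within using that v_dx DERIV_continuous by force
qed (use v_dt in auto)

text \<open>The only properties of the boundary conditions used in computing the derivative of H.\<close>

definition boundary_admissible :: bool where
  "boundary_admissible \<longleftrightarrow>
     (\<forall>x\<in>{0<..<1}. 0 < ub x \<and> 0 < vb x)
     \<and> continuous_on ({0..1} \<times> {0<..}) (\<lambda>(x, t). vb x / ub x * (u x t - ub x) * (u x t - ub x))
     \<and> continuous_on ({0..1} \<times> {0<..}) (\<lambda>(x, t). vb x / ub x * (u x t - ub x) * ut x t)
     \<and> continuous_on ({0..1} \<times> {0<..}) (\<lambda>(x, t). ub x / vb x * (v x t - vb x) * (v x t - vb x))
     \<and> continuous_on ({0..1} \<times> {0<..}) (\<lambda>(x, t). ub x / vb x * (v x t - vb x) * vt x t)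
     \<and> (\<forall>t>0. lyapunov_flux (c 0) (ub 0) (vb 0) (u 0 t) (v 0 t)
              = lyapunov_flux (c 1) (ub 1) (vb 1) (u 1 t) (v 1 t))"

lemma Hfun_has_derivative:
  assumes adm: boundary_admissible and t: "t > 0"
  shows "((\<lambda>s. Hfun c ub vb (\<lambda>x. u x s) (\<lambda>x. v x s)) has_real_derivative
           integral {0..1} (\<lambda>x. c x * (vb x / ub x * (u x t - ub x) * ut x t
                                      + ub x / vb x * (v x t - vb x) * vt x t))) (at t)"
proof -
  let ?D = "{0..1::real} \<times> {0::real<..}"
  have R1: "continuous_on ?D (\<lambda>(x, t). vb x / ub x * (u x t - ub x) * (u x t - ub x))"
    and S1: "continuous_on ?D (\<lambda>(x, t). vb x / ub x * (u x t - ub x) * ut x t)"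
    and R2: "continuous_on ?D (\<lambda>(x, t). ub x / vb x * (v x t - vb x) * (v x t - vb x))"
    and S2: "continuous_on ?D (\<lambda>(x, t). ub x / vb x * (v x t - vb x) * vt x t)"
    using adm unfolding boundary_admissible_def by auto
  define f where "f x s = c x * (vb x / ub x * (u x s - ub x) * (u x s - ub x)
                                + ub x / vb x * (v x s - vb x) * (v x s - vb x))" for x s
  define g where "g x s = 2 * (c x * (vb x / ub x * (u x s - ub x) * ut x s
                                      + ub x / vb x * (v x s - vb x) * vt x s))" for x s
  have "((\<lambda>s. integral {0..1} (\<lambda>x. f x s)) has_real_derivative integral {0..1} (\<lambda>x. g x t)) (at t)"
  proof (rule has_real_derivative_integral_parametric[OF open_greaterThan])
    show "((\<lambda>s. f x s) has_real_derivative g x s) (at s)" if "x \<in> {0..1}" "s \<in> {0<..}" for x s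
    proof -
      define a b where "a = vb x / ub x" and "b = ub x / vb x"
      have "((\<lambda>s. c x * (a * (u x s - ub x) * (u x s - ub x) + b * (v x s - vb x) * (v x s - vb x)))
          has_real_derivative
            2 * (c x * (a * (u x s - ub x) * ut x s + b * (v x s - vb x) * vt x s))) (at s)"
        using that by (auto intro!: derivative_eq_intros u_dt v_dt simp: algebra_simps)
      then show ?thesis by (simp add: f_def g_def a_def b_def)
    qed
    show "continuous_on {0..1} (\<lambda>x. f x s)" if "s \<in> {0<..}" for s
      unfolding f_def
      by (intro continuous_on_mult[OF continuous_on_c] continuous_on_add
          continuous_on_Times_slice[OF R1 that] continuous_on_Times_slice[OF R2 that])
    show "continuous_on ?D (\<lambda>(x, s). g x s)"
      using continuous_on_mult[OF continuous_on_Times_fst[OF continuous_on_c]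
          continuous_on_add[OF S1 S2]]
      unfolding g_def case_prod_beta by (intro continuous_on_mult[OF continuous_on_const])
  qed (use t in auto)
  from DERIV_cmult[OF this, of "1/2"] show ?thesis
    by (simp add: Hfun_def f_def g_def power2_eq_square mult.assoc)
qed

lemma integral_flux_balance:
  assumes adm: boundary_admissible and t: "t > 0"
  shows "integral {0..1} (\<lambda>x. c x * (vb x / ub x * (u x t - ub x) * ut x t
                                     + ub x / vb x * (v x t - vb x) * vt x t))
         = - (\<alpha> / 2) * integral {0..1} (\<lambda>x. c x * Jfun (u x t) (v x t) (ub x) (vb x)
                                              / ((1 + u x t + v x t) * (1 + ub x + vb x)))"
proof -
  let ?D = "{0..1::real} \<times> {0::real<..}"
  have pos: "\<And>x. x \<in> {0<..<1} \<Longrightarrow> 0 < ub x \<and> 0 < vb x"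
    and R1: "continuous_on ?D (\<lambda>(x, t). vb x / ub x * (u x t - ub x) * (u x t - ub x))"
    and S1: "continuous_on ?D (\<lambda>(x, t). vb x / ub x * (u x t - ub x) * ut x t)"
    and R2: "continuous_on ?D (\<lambda>(x, t). ub x / vb x * (v x t - vb x) * (v x t - vb x))"
    and S2: "continuous_on ?D (\<lambda>(x, t). ub x / vb x * (v x t - vb x) * vt x t)"
    and ends: "lyapunov_flux (c 0) (ub 0) (vb 0) (u 0 t) (v 0 t)
               = lyapunov_flux (c 1) (ub 1) (vb 1) (u 1 t) (v 1 t)"
    using adm t unfolding boundary_admissible_def by auto
  define A where "A x = c x * (vb x / ub x * (u x t - ub x) * ut x t
                               + ub x / vb x * (v x t - vb x) * vt x t)" for x
  define B where "B x = c x * Jfun (u x t) (v x t) (ub x) (vb x)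
                          / ((1 + u x t + v x t) * (1 + ub x + vb x))" for x
  define G where "G x = lyapunov_flux (c x) (ub x) (vb x) (u x t) (v x t)" for x
  have A_int: "A integrable_on {0..1}"
    unfolding A_def using t
    by (intro integrable_continuous_interval continuous_on_mult[OF continuous_on_c]
        continuous_on_add continuous_on_Times_slice[OF S1] continuous_on_Times_slice[OF S2]) auto
  have "continuous_on {0..1} (\<lambda>x. (c x)\<^sup>2 / 2 * (ub x / vb x * (v x t - vb x) * (v x t - vb x)
                                         - vb x / ub x * (u x t - ub x) * (u x t - ub x)))"
    by (rule continuous_on_mult[OF _ continuous_on_diff[OF continuous_on_Times_slice[OF R2]
          continuous_on_Times_slice[OF R1]]])
      (use t in \<open>auto intro!: continuous_intros continuous_on_c\<close>)
  then have "continuous_on {0..1} G"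
    by (simp add: G_def lyapunov_flux_def power2_eq_square mult.assoc)
  moreover have "(G has_vector_derivative A x + \<alpha> / 2 * B x) (at x)" if x: "x \<in> {0<..<1}" for x
  proof -
    have x01: "x \<in> {0..1}" and at_x: "at x within {0..1} = at x"
      using x by (auto simp: at_within_Icc_at)
    have "(G has_real_derivative A x + \<alpha> / 2 * B x) (at x)"
      unfolding G_def A_def B_def
    proof (rule lyapunov_flux_has_derivative)
      show "(c has_real_derivative c' x) (at x)" "(ub has_real_derivative ub' x) (at x)"
        "(vb has_real_derivative vb' x) (at x)"
        "((\<lambda>y. u y t) has_real_derivative ux x t) (at x)"
        "((\<lambda>y. v y t) has_real_derivative vx x t) (at x)"
        using c_deriv[OF x01] ub_deriv[OF x01] vb_deriv[OF x01] u_dx[OF x01 t] v_dx[OF x01 t]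
        by (simp_all add: at_x)
    qed (use x01 t pos[OF x] c_pos stat_u stat_v eq_u eq_v u_nonneg v_nonneg
          in \<open>auto simp: less_imp_neq[symmetric]\<close>)
    then show ?thesis by (simp add: has_real_derivative_iff_has_vector_derivative)
  qed
  ultimately have "((\<lambda>x. A x + \<alpha> / 2 * B x) has_integral G 1 - G 0) {0..1}"
    by (intro fundamental_theorem_of_calculus_interior) auto
  then have "((\<lambda>x. A x + \<alpha> / 2 * B x) has_integral 0) {0..1}" using ends by (simp add: G_def)
  from has_integral_diff[OF this integrable_integral[OF A_int]]
  have "((\<lambda>x. \<alpha> / 2 * B x) has_integral - integral {0..1} A) {0..1}" by simp
  then have "integral {0..1} (\<lambda>x. \<alpha> / 2 * B x) = - integral {0..1} A" by (rule integral_unique)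
  then have "integral {0..1} A = - (\<alpha> / 2) * integral {0..1} B" by simp
  then show ?thesis unfolding A_def[abs_def] B_def[abs_def] .
qed

lemma lyapunov_has_derivative:
  assumes boundary_admissible and "t > 0"
  shows "((\<lambda>s. Hfun c ub vb (\<lambda>x. u x s) (\<lambda>x. v x s)) has_real_derivative
           - (\<alpha> / 2) * integral {0..1} (\<lambda>x. c x * Jfun (u x t) (v x t) (ub x) (vb x)
                                              / ((1 + u x t + v x t) * (1 + ub x + vb x)))) (at t)"
  using Hfun_has_derivative[OF assms] unfolding integral_flux_balance[OF assms] .

lemma periodic_boundary_admissible:
  assumes "c 0 = c 1" "ub 0 = ub 1" "vb 0 = vb 1"
    and pos: "\<forall>x\<in>{0..1}. 0 < ub x \<and> 0 < vb x"
    and "\<forall>t>0. u 0 t = u 1 t \<and> v 0 t = v 1 t"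
  shows boundary_admissible
proof -
  have "\<forall>p\<in>{0..1} \<times> {0<..}. ub (fst p) \<noteq> 0 \<and> vb (fst p) \<noteq> 0"
    using pos by fastforce
  then show ?thesis
    using assms continuous_on_Times_fst[OF continuous_on_ub]
      continuous_on_Times_fst[OF continuous_on_vb] continuous_on_u continuous_on_v ut_cont vt_cont
    unfolding boundary_admissible_def case_prod_beta by (auto intro!: continuous_intros)
qed

lemma dirichlet_boundary_admissible:
  assumes ub0: "ub 0 = 0" and vb1: "vb 1 = 0" and m: "0 < m"
    and mM: "\<forall>x\<in>{0<..<1}. m \<le> ub x / x \<and> ub x / x \<le> M \<and> m \<le> vb x / (1 - x) \<and> vb x / (1 - x) \<le> M"
    and u0v1: "\<forall>t>0. u 0 t = 0 \<and> v 1 t = 0"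
    and K: "\<forall>x\<in>{0..1}. \<forall>t>0. u x t \<le> K * x \<and> v x t \<le> K * (1 - x)"
  shows boundary_admissible
proof -
  define L where "L = (K + M) / m"
  have ub_bounds: "m * x \<le> ub x \<and> ub x \<le> M * x"
    and vb_bounds: "m * (1 - x) \<le> vb x \<and> vb x \<le> M * (1 - x)" if "x \<in> {0<..<1}" for x
    using mM that by (auto simp: pos_le_divide_eq pos_divide_le_eq)
  have pos: "0 < ub x" "0 < vb x" if "x \<in> {0<..<1}" for x
    using ub_bounds[OF that] vb_bounds[OF that] m that
    by (smt (verit) greaterThanLessThan_iff mult_pos_pos)+
  have u_dev: "\<bar>u x s - ub x\<bar> \<le> L * ub x" if x: "x \<in> {0<..<1}" and s: "s \<in> {0<..}" for x s
    unfolding L_def using x s m ub_bounds[OF x] u_nonneg[of x s] K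
    by (intro abs_diff_le_of_linear_bounds[where d = x]) auto
  have v_dev: "\<bar>v x s - vb x\<bar> \<le> L * vb x" if x: "x \<in> {0<..<1}" and s: "s \<in> {0<..}" for x s
    unfolding L_def using x s m vb_bounds[OF x] v_nonneg[of x s] K
    by (intro abs_diff_le_of_linear_bounds[where d = "1 - x"]) auto
  have ut0: "ut 0 s = 0" and vt1: "vt 1 s = 0" if "s > 0" for s
    using DERIV_local_const[OF u_dt[of 0 s] that] DERIV_local_const[OF v_dt[of 1 s] that] u0v1 that
    by auto
  let ?D = "{0..1::real} \<times> {0::real<..}"
  have u_dev_cont: "continuous_on ?D (\<lambda>(x, t). u x t - ub x)"
    and v_dev_cont: "continuous_on ?D (\<lambda>(x, t). v x t - vb x)"
    using continuous_on_diff[OF continuous_on_u continuous_on_Times_fst[OF continuous_on_ub]]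
      continuous_on_diff[OF continuous_on_v continuous_on_Times_fst[OF continuous_on_vb]]
    by (simp_all add: case_prod_beta)
  note ratio_product = continuous_on_ratio_product[OF open_greaterThan]
  have "continuous_on ?D (\<lambda>(x, t). vb x / ub x * (u x t - ub x) * (u x t - ub x))"
    "continuous_on ?D (\<lambda>(x, t). vb x / ub x * (u x t - ub x) * ut x t)"
    by (rule ratio_product[OF continuous_on_ub continuous_on_vb u_dev_cont];
        use u_dev_cont ut_cont pos u_dev ub0 vb1 u0v1 ut0 in auto)+
  moreover have "continuous_on ?D (\<lambda>(x, t). ub x / vb x * (v x t - vb x) * (v x t - vb x))"
    "continuous_on ?D (\<lambda>(x, t). ub x / vb x * (v x t - vb x) * vt x t)"
    by (rule ratio_product[OF continuous_on_vb continuous_on_ub v_dev_cont];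
        use v_dev_cont vt_cont pos v_dev ub0 vb1 u0v1 vt1 in auto)+
  ultimately show ?thesis
    using pos ub0 vb1 unfolding boundary_admissible_def lyapunov_flux_def by auto
qed

end

theorem mainTheorem10:
  fixes c c' ub ub' vb vb' :: "real \<Rightarrow> real"
    and u ux ut v vx vt :: "real \<Rightarrow> real \<Rightarrow> real"
    and \<alpha> :: real
  assumes alpha_pos: "\<alpha> > 0"
    \<comment> \<open>c is C^1 on [0,1] and positive\<close>
    and c_deriv: "\<forall>x\<in>{0..1}. (c has_real_derivative c' x) (at x within {0..1})"
    and c'_cont: "continuous_on {0..1} c'"
    and c_pos: "\<forall>x\<in>{0..1}. c x > 0"
    \<comment> \<open>(ub,vb) is a C^1 stationary solution of (S)\<close>
    and ub_deriv: "\<forall>x\<in>{0..1}. (ub has_real_derivative ub' x) (at x within {0..1})"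
    and vb_deriv: "\<forall>x\<in>{0..1}. (vb has_real_derivative vb' x) (at x within {0..1})"
    and ub'_cont: "continuous_on {0..1} ub'"
    and vb'_cont: "continuous_on {0..1} vb'"
    and stat_u: "\<forall>x\<in>{0..1}. c' x * ub x + c x * ub' x
                   = \<alpha> * vb x / (1 + ub x + vb x) - ub x"
    and stat_v: "\<forall>x\<in>{0..1}. - (c' x * vb x + c x * vb' x)
                   = \<alpha> * ub x / (1 + ub x + vb x) - vb x"
    \<comment> \<open>(u,v) is a classical (C^1 in (x,t)) nonnegative solution of (S) for t > 0\<close>
    and u_dx: "\<forall>x\<in>{0..1}. \<forall>t>0. ((\<lambda>y. u y t) has_real_derivative ux x t) (at x within {0..1})"
    and u_dt: "\<forall>x\<in>{0..1}. \<forall>t>0. ((\<lambda>s. u x s) has_real_derivative ut x t) (at t)"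
    and v_dx: "\<forall>x\<in>{0..1}. \<forall>t>0. ((\<lambda>y. v y t) has_real_derivative vx x t) (at x within {0..1})"
    and v_dt: "\<forall>x\<in>{0..1}. \<forall>t>0. ((\<lambda>s. v x s) has_real_derivative vt x t) (at t)"
    and ux_cont: "continuous_on ({0..1} \<times> {0<..}) (\<lambda>(x, t). ux x t)"
    and ut_cont: "continuous_on ({0..1} \<times> {0<..}) (\<lambda>(x, t). ut x t)"
    and vx_cont: "continuous_on ({0..1} \<times> {0<..}) (\<lambda>(x, t). vx x t)"
    and vt_cont: "continuous_on ({0..1} \<times> {0<..}) (\<lambda>(x, t). vt x t)"
    and eq_u: "\<forall>x\<in>{0..1}. \<forall>t>0. ut x t + (c' x * u x t + c x * ux x t)
                   = \<alpha> * v x t / (1 + u x t + v x t) - u x t"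
    and eq_v: "\<forall>x\<in>{0..1}. \<forall>t>0. vt x t - (c' x * v x t + c x * vx x t)
                   = \<alpha> * u x t / (1 + u x t + v x t) - v x t"
    and nonneg: "\<forall>x\<in>{0..1}. \<forall>t>0. u x t \<ge> 0 \<and> v x t \<ge> 0"
    \<comment> \<open>boundary conditions: either (PBC) or (DBC)\<close>
    and bc:
      "(c 0 = c 1 \<and> ub 0 = ub 1 \<and> vb 0 = vb 1
         \<and> (\<forall>x\<in>{0..1}. ub x > 0 \<and> vb x > 0)
         \<and> (\<forall>t>0. u 0 t = u 1 t \<and> v 0 t = v 1 t))
       \<or>
       (ub 0 = 0 \<and> vb 1 = 0
         \<and> (\<exists>m M. 0 < m \<and> m \<le> M \<and>
              (\<forall>x\<in>{0<..<1}. m \<le> ub x / x \<and> ub x / x \<le> M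
                             \<and> m \<le> vb x / (1 - x) \<and> vb x / (1 - x) \<le> M))
         \<and> (\<forall>t>0. u 0 t = 0 \<and> v 1 t = 0)
         \<and> (\<exists>K. \<forall>x\<in>{0..1}. \<forall>t>0. u x t \<le> K * x \<and> v x t \<le> K * (1 - x)))"
  shows "\<forall>t>0. ((\<lambda>s. Hfun c ub vb (\<lambda>x. u x s) (\<lambda>x. v x s)) has_real_derivative
            (- (\<alpha> / 2) * integral {0..1}
                 (\<lambda>x. c x * Jfun (u x t) (v x t) (ub x) (vb x)
                       / ((1 + u x t + v x t) * (1 + ub x + vb x))))) (at t)"
proof -
  interpret transport_reaction_system \<alpha> c c' ub ub' vb vb' u ux ut v vx vt
    by unfold_locales (use assms in auto)
  have boundary_admissible
    using bc periodic_boundary_admissible dirichlet_boundary_admissible by blast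
  then show ?thesis using lyapunov_has_derivative by blast
qed

end
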